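(* Let $H$ be a graph with vertices $a_1,\dots,a_k$ ($k\ge2$) and at least one edge, let $y^*$ be an optimal solution of the fractional independent-set LP of $H$, and let $f^*=(a_i,a_j)\in E(H)$ be an edge with $y^*_{a_i}+y^*_{a_j}=1$. Let $m$ be such that the quantities $m^{y^*_{a_\ell}}$ are integers. Let $G_0$ be the edge-colored graph whose vertex set is partitioned into $V_1,\dots,V_k$ with $|V_\ell|=m^{y^*_{a_\ell}}$, in which for every edge $(a_\ell,a_{\ell'})\in E(H)$ all vertices of $V_\ell$ are joined to all vertices of $V_{\ell'}$, and all edges have color $0$. Let $\mathcal{G}_0$ be the distribution supported on $G_0$, and let $\mathcal{G}_1$ be the distribution of the graph obtained from $G_0$ by choosing one edge $e^*$ uniformly at random among the edges between $V_i$ and $V_j$ and changing its color to $1$. Let $\mathcal{G}=\frac12\mathcal{G}_0+\frac12\mathcal{G}_1$. Then any algorithm that, given $G\sim\mathcal{G}$, determines with probability at least $2/3$ whether $G$ belongs to the support of $\mathcal{G}_0$ or of $\mathcal{G}_1$ must make $\Omega(m)$ queries to the graph.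
   Context: The fractional independent-set LP of $H$ is: maximize $\sum_{a\in V(H)}y_a$ subject to $y_a+y_b\le1$ for all $(a,b)\in E(H)$ and $y\ge 0$; such a tight edge $f^*$ always exists for an optimal $y^*$. Queries to an edge-colored graph: degree queries, neighbor queries (return the $i$-th neighbor of $v$), pair queries (return whether $\{u,v\}$ is an edge), and edge-sample queries (return a uniformly random edge); whenever an edge is revealed by a query, its color is revealed too. *)

theory Defs
  imports "HOL-Probability.Probability"
begin

definition lp_feasible :: "nat \<Rightarrow> (nat \<times> nat) set \<Rightarrow> (nat \<Rightarrow> real) \<Rightarrow> bool" where
  "lp_feasible k EH y \<longleftrightarrow> (\<forall>a<k. y a \<ge> 0) \<and> (\<forall>(a,b)\<in>EH. y a + y b \<le> 1)"

definition lp_optimal :: "nat \<Rightarrow> (nat \<times> nat) set \<Rightarrow> (nat \<Rightarrow> real) \<Rightarrow> bool" where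
  "lp_optimal k EH y \<longleftrightarrow> lp_feasible k EH y \<and>
     (\<forall>y'. lp_feasible k EH y' \<longrightarrow> (\<Sum>a<k. y' a) \<le> (\<Sum>a<k. y a))"

datatype 'v query = Deg 'v | Nbr 'v nat | PairQ 'v 'v | Sample

datatype 'v answer =
    ADeg nat
  | ANbr "('v \<times> nat) option"        \<comment> \<open>i-th neighbour and colour of that edge, if it exists\<close>
  | APair "nat option"                \<comment> \<open>colour of the edge if it is an edge\<close>
  | ASample "'v set" nat              \<comment> \<open>uniformly random edge and its colour\<close>

definition edges_of :: "('v \<Rightarrow> 'v \<Rightarrow> bool) \<Rightarrow> 'v set set" where
  "edges_of E = {{u, v} | u v. E u v}"

definition valid_adj :: "('v \<Rightarrow> 'v \<Rightarrow> bool) \<Rightarrow> ('v \<Rightarrow> 'v list) \<Rightarrow> bool" where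
  "valid_adj E adj \<longleftrightarrow> (\<forall>v. distinct (adj v) \<and> set (adj v) = {u. E v u})"

fun oracle_answer :: "('v \<Rightarrow> 'v \<Rightarrow> bool) \<Rightarrow> ('v \<Rightarrow> 'v list) \<Rightarrow> ('v set \<Rightarrow> nat) \<Rightarrow> 'v query \<Rightarrow> 'v answer pmf" where
  "oracle_answer E adj col (Deg v) = return_pmf (ADeg (length (adj v)))"
| "oracle_answer E adj col (Nbr v i) = return_pmf (ANbr
      (if i < length (adj v) then Some (adj v ! i, col {v, adj v ! i}) else None))"
| "oracle_answer E adj col (PairQ u v) = return_pmf (APair (if E u v then Some (col {u, v}) else None))"
| "oracle_answer E adj col Sample = map_pmf (\<lambda>e. ASample e (col e)) (pmf_of_set (edges_of E))"

text \<open>A randomized adaptive algorithm: random seed r, next query chosen as a function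
  of the seed and the transcript so far. run produces the transcript of q queries.\<close>
fun run :: "('v \<Rightarrow> 'v \<Rightarrow> bool) \<Rightarrow> ('v \<Rightarrow> 'v list) \<Rightarrow> ('v set \<Rightarrow> nat)
      \<Rightarrow> ('r \<Rightarrow> 'v answer list \<Rightarrow> 'v query) \<Rightarrow> 'r \<Rightarrow> nat \<Rightarrow> 'v answer list pmf" where
  "run E adj col step r 0 = return_pmf []"
| "run E adj col step r (Suc t) =
     bind_pmf (run E adj col step r t) (\<lambda>tr.
     map_pmf (\<lambda>a. tr @ [a]) (oracle_answer E adj col (step r tr)))"

text \<open>Vertices of G0 are pairs (l, x) with l < k and x < n l; V_l = {(l,x). x < n l}.\<close>
definition G0_adj :: "(nat \<times> nat) set \<Rightarrow> (nat \<Rightarrow> nat) \<Rightarrow> (nat \<times> nat) \<Rightarrow> (nat \<times> nat) \<Rightarrow> bool" where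
  "G0_adj EH n u v \<longleftrightarrow> (fst u, fst v) \<in> EH \<and> snd u < n (fst u) \<and> snd v < n (fst v)"

definition part :: "(nat \<Rightarrow> nat) \<Rightarrow> nat \<Rightarrow> (nat \<times> nat) set" where
  "part n l = {(l, x) | x. x < n l}"

text \<open>Colour-1 edge e* uniform among edges between V_i and V_j.\<close>
definition special_edges :: "(nat \<Rightarrow> nat) \<Rightarrow> nat \<Rightarrow> nat \<Rightarrow> (nat \<times> nat) set set" where
  "special_edges n i j = {{u, v} | u v. u \<in> part n i \<and> v \<in> part n j}"

definition colouring_dist :: "(nat \<Rightarrow> nat) \<Rightarrow> nat \<Rightarrow> nat \<Rightarrow> bool \<Rightarrow> ((nat \<times> nat) set \<Rightarrow> nat) pmf" where
  "colouring_dist n i j b =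
     (if b then map_pmf (\<lambda>es e. if e = es then 1 else 0) (pmf_of_set (special_edges n i j))
      else return_pmf (\<lambda>e. 0))"

text \<open>Probability that the algorithm (seed distribution R, query rule step, output rule out,
  q queries; output True means "G is in the support of G_1") answers correctly when
  G is drawn from 1/2 G_0 + 1/2 G_1.\<close>
definition success_prob ::
  "(nat \<times> nat) set \<Rightarrow> (nat \<Rightarrow> nat) \<Rightarrow> nat \<Rightarrow> nat \<Rightarrow> ((nat \<times> nat) \<Rightarrow> (nat \<times> nat) list)
   \<Rightarrow> nat pmf \<Rightarrow> (nat \<Rightarrow> (nat \<times> nat) answer list \<Rightarrow> (nat \<times> nat) query)
   \<Rightarrow> (nat \<Rightarrow> (nat \<times> nat) answer list \<Rightarrow> bool) \<Rightarrow> nat \<Rightarrow> real" where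
  "success_prob EH n i j adj R step out q =
     pmf (bind_pmf (bernoulli_pmf (1/2)) (\<lambda>b.
          bind_pmf (colouring_dist n i j b) (\<lambda>col.
          bind_pmf R (\<lambda>r.
          map_pmf (\<lambda>tr. out r tr = b) (run (G0_adj EH n) adj col step r q))))) True"

end

theory Submission
  imports Defs
begin

(* Until an algorithm has seen the colour of e*, its transcript is distributed exactly as on G_0.
   Each query reveals the colour of at most one edge, so for a fixed seed a run of q queries on G_0
   reveals at most q of the m = |V_i| |V_j| candidates for e*.  Averaging over e*, the algorithm
   accepts G_1 with probability at most (its acceptance probability on G_0) + q/m, so its success
   probability is at most 1/2 + q/(2m).  A randomised algorithm is a mixture of deterministic ones,
   hence success 2/3 forces q >= m/3. *)

(* Out-of-range neighbour queries and pair queries on non-edges reveal no colour; charging them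
   with an edge only over-approximates what is revealed. *)
fun revealed_edge :: "('v \<Rightarrow> 'v list) \<Rightarrow> 'v query \<Rightarrow> 'v answer \<Rightarrow> 'v set option" where
  "revealed_edge adj (Deg v) a = None"
| "revealed_edge adj (Nbr v i) a = Some {v, adj v ! i}"
| "revealed_edge adj (PairQ u v) a = Some {u, v}"
| "revealed_edge adj Sample (ASample e c) = Some e"
| "revealed_edge adj Sample a = None"

definition revealed_edges ::
  "('v \<Rightarrow> 'v list) \<Rightarrow> ('r \<Rightarrow> 'v answer list \<Rightarrow> 'v query) \<Rightarrow> 'r \<Rightarrow> 'v answer list \<Rightarrow> 'v set set" where
  "revealed_edges adj step r tr =
     {e. \<exists>p<length tr. revealed_edge adj (step r (take p tr)) (tr ! p) = Some e}"

lemma revealed_edges_snoc: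
  "revealed_edges adj step r (tr @ [a]) =
     revealed_edges adj step r tr \<union> {e. revealed_edge adj (step r tr) a = Some e}"
proof -
  have "(\<exists>p<length (tr @ [a]). P p) \<longleftrightarrow> (\<exists>p<length tr. P p) \<or> P (length tr)" for P
    by (auto simp: less_Suc_eq)
  then show ?thesis
    unfolding revealed_edges_def by (auto simp: nth_append)
qed

lemma revealed_edges_subset_image:
  "revealed_edges adj step r tr
     \<subseteq> (\<lambda>p. the (revealed_edge adj (step r (take p tr)) (tr ! p))) ` {..<length tr}"
  unfolding revealed_edges_def by force

lemma finite_revealed_edges: "finite (revealed_edges adj step r tr)"
  by (rule finite_subset[OF revealed_edges_subset_image]) simp

lemma card_revealed_edges_le: "card (revealed_edges adj step r tr) \<le> length tr"
proof -
  have "card (revealed_edges adj step r tr)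
      \<le> card ((\<lambda>p. the (revealed_edge adj (step r (take p tr)) (tr ! p))) ` {..<length tr})"
    by (rule card_mono[OF _ revealed_edges_subset_image]) simp
  also have "\<dots> \<le> length tr"
    using card_image_le[of "{..<length tr}"] by simp
  finally show ?thesis .
qed

lemma pmf_oracle_answer_eq_if_unrevealed:
  assumes "\<And>x. x \<noteq> e \<Longrightarrow> col1 x = col2 x"
    and "revealed_edge adj Q a \<noteq> Some e"
  shows "pmf (oracle_answer E adj col1 Q) a = pmf (oracle_answer E adj col2 Q) a"
proof (cases Q)
  case Sample
  have "(\<lambda>x. ASample x (col1 x)) -` {a} = (\<lambda>x. ASample x (col2 x)) -` {a}"
  proof (cases a)
    case (ASample e' c)
    then have "col1 e' = col2 e'" using assms Sample by auto
    then show ?thesis using ASample by (auto simp: vimage_def)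
  qed auto
  then show ?thesis using Sample by (simp add: pmf_map)
qed (use assms in auto)

lemma pmf_run_Suc:
  "pmf (run E adj col step r (Suc t)) tr =
     (if tr = [] then 0 else pmf (run E adj col step r t) (butlast tr) *
        pmf (oracle_answer E adj col (step r (butlast tr))) (last tr))"
proof -
  let ?ans = "\<lambda>tr'. oracle_answer E adj col (step r tr')"
  have "pmf (map_pmf (\<lambda>a. tr' @ [a]) (?ans tr')) tr =
      indicator {butlast tr} tr' * (if tr = [] then 0 else pmf (?ans (butlast tr)) (last tr))" for tr'
  proof (cases "tr \<noteq> [] \<and> tr' = butlast tr")
    case True
    then have "tr = tr' @ [last tr]" by simp
    then have "pmf (map_pmf (\<lambda>a. tr' @ [a]) (?ans tr')) tr = pmf (?ans tr') (last tr)"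
      by (metis (no_types, lifting) inj_def pmf_map_inj' same_append_eq list.inject)
    then show ?thesis using True by simp
  next
    case False
    then have "tr \<notin> (\<lambda>a. tr' @ [a]) ` set_pmf (?ans tr')" by auto
    then show ?thesis using False by (auto simp: pmf_map_outside)
  qed
  then have "pmf (run E adj col step r (Suc t)) tr = (\<integral>tr'. indicator {butlast tr} tr' *
      (if tr = [] then 0 else pmf (?ans (butlast tr)) (last tr)) \<partial>run E adj col step r t)"
    by (simp add: pmf_bind)
  then show ?thesis
    by (simp add: measure_pmf_single)
qed

lemma pmf_run_eq_if_unrevealed:
  assumes "\<And>x. x \<noteq> e \<Longrightarrow> col1 x = col2 x"
    and "e \<notin> revealed_edges adj step r tr"
  shows "pmf (run E adj col1 step r t) tr = pmf (run E adj col2 step r t) tr"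
  using assms(2)
proof (induction t arbitrary: tr)
  case (Suc t)
  show ?case
  proof (cases "tr = []")
    case False
    then have "tr = butlast tr @ [last tr]" by simp
    then have unrevealed_prefix: "e \<notin> revealed_edges adj step r (butlast tr)"
      and unrevealed: "revealed_edge adj (step r (butlast tr)) (last tr) \<noteq> Some e"
      using Suc.prems revealed_edges_snoc[of adj step r "butlast tr" "last tr"] by auto
    have "pmf (run E adj col1 step r t) (butlast tr) = pmf (run E adj col2 step r t) (butlast tr)"
      by (rule Suc.IH[OF unrevealed_prefix])
    moreover have "pmf (oracle_answer E adj col1 (step r (butlast tr))) (last tr)
        = pmf (oracle_answer E adj col2 (step r (butlast tr))) (last tr)"
      by (rule pmf_oracle_answer_eq_if_unrevealed[OF assms(1) unrevealed])
    ultimately show ?thesis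
      by (simp only: pmf_run_Suc)
  qed (simp add: pmf_run_Suc del: run.simps)
qed simp

lemma length_run: "tr \<in> set_pmf (run E adj col step r t) \<Longrightarrow> length tr = t"
  by (induction t arbitrary: tr) auto

lemma measure_pmf_le_add_if_eq_outside:
  assumes "\<And>x. x \<notin> B \<Longrightarrow> pmf p x = pmf p' x"
  shows "measure_pmf.prob p A \<le> measure_pmf.prob p' A + measure_pmf.prob p' B"
proof -
  have agree: "measure_pmf.prob p C = measure_pmf.prob p' C" if "C \<subseteq> - B" for C
    unfolding measure_pmf_conv_infsetsum by (rule infsetsum_cong) (use assms that in auto)
  have "measure_pmf.prob p B = 1 - measure_pmf.prob p (- B)"
    using measure_pmf.prob_compl[of B p] by (simp add: Compl_eq_Diff_UNIV)
  also have "\<dots> = 1 - measure_pmf.prob p' (- B)"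
    by (simp add: agree)
  also have "\<dots> = measure_pmf.prob p' B"
    using measure_pmf.prob_compl[of B p'] by (simp add: Compl_eq_Diff_UNIV)
  finally have B: "measure_pmf.prob p B = measure_pmf.prob p' B" .
  have "measure_pmf.prob p A \<le> measure_pmf.prob p (A - B) + measure_pmf.prob p B"
    using measure_Un_le[of "A - B" p B] measure_pmf.finite_measure_mono[of A "(A - B) \<union> B" p]
    by auto
  also have "measure_pmf.prob p (A - B) \<le> measure_pmf.prob p' A"
    using agree[of "A - B"] measure_pmf.finite_measure_mono[of "A - B" A p'] by force
  finally show ?thesis
    using B by simp
qed

lemma integrable_measure_pmf_bounded:
  fixes f :: "'a \<Rightarrow> real"
  assumes "\<And>x. \<bar>f x\<bar> \<le> B"
  shows "integrable (measure_pmf p) f"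
  by (rule measure_pmf.integrable_const_bound[where B = B]) (use assms in auto)

lemma sum_prob_mem_le:
  fixes X :: "'a \<Rightarrow> 'b set"
  assumes "finite S" and "\<And>x. x \<in> set_pmf p \<Longrightarrow> card (S \<inter> X x) \<le> q"
  shows "(\<Sum>e\<in>S. measure_pmf.prob p {x. e \<in> X x}) \<le> real q"
proof -
  have "(\<Sum>e\<in>S. measure_pmf.prob p {x. e \<in> X x})
      = (\<Sum>e\<in>S. \<integral>x. indicator {x. e \<in> X x} x \<partial>p)"
    by simp
  also have "\<dots> = (\<integral>x. (\<Sum>e\<in>S. indicator {x. e \<in> X x} x) \<partial>p)"
    by (rule Bochner_Integration.integral_sum[symmetric])
      (rule integrable_measure_pmf_bounded[where B = 1], simp)
  also have "\<dots> = (\<integral>x. real (card (S \<inter> X x)) \<partial>p)"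
    using assms(1) by (simp add: indicator_def Collect_mem_eq)
  also have "\<dots> \<le> real q"
  proof (rule measure_pmf.integral_le_const)
    show "integrable (measure_pmf p) (\<lambda>x. real (card (S \<inter> X x)))"
      by (rule integrable_measure_pmf_bounded[where B = "card S"])
        (simp add: assms(1) card_mono)
    show "AE x in measure_pmf p. real (card (S \<inter> X x)) \<le> real q"
      by (rule AE_pmfI) (simp add: assms(2))
  qed
  finally show ?thesis .
qed

definition accept_prob ::
  "('v \<Rightarrow> 'v \<Rightarrow> bool) \<Rightarrow> ('v \<Rightarrow> 'v list) \<Rightarrow> ('v set \<Rightarrow> nat) \<Rightarrow> ('r \<Rightarrow> 'v answer list \<Rightarrow> 'v query)
   \<Rightarrow> ('r \<Rightarrow> 'v answer list \<Rightarrow> bool) \<Rightarrow> 'r \<Rightarrow> nat \<Rightarrow> real" where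
  "accept_prob E adj col step out r q = measure_pmf.prob (run E adj col step r q) {tr. out r tr}"

lemma accept_prob_le_add_prob_revealed:
  assumes "\<And>x. x \<noteq> e \<Longrightarrow> col1 x = col2 x"
  shows "accept_prob E adj col1 step out r q \<le> accept_prob E adj col2 step out r q
           + measure_pmf.prob (run E adj col2 step r q) {tr. e \<in> revealed_edges adj step r tr}"
  unfolding accept_prob_def
  by (rule measure_pmf_le_add_if_eq_outside) (simp add: pmf_run_eq_if_unrevealed[OF assms])

lemma success_prob_mixture:
  "success_prob EH n i j adj R step out q
     = (\<integral>r. success_prob EH n i j adj (return_pmf r) step out q \<partial>R)"
proof -
  let ?trial = "\<lambda>b col r. map_pmf (\<lambda>tr. out r tr = b) (run (G0_adj EH n) adj col step r q)"
  have "bernoulli_pmf (1/2) \<bind> (\<lambda>b. colouring_dist n i j b \<bind> (\<lambda>col. R \<bind> ?trial b col))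
      = R \<bind> (\<lambda>r. bernoulli_pmf (1/2) \<bind> (\<lambda>b. colouring_dist n i j b \<bind> (\<lambda>col. ?trial b col r)))"
    by (simp only: bind_commute_pmf[of "colouring_dist n i j _" R]
        bind_commute_pmf[of "bernoulli_pmf _" R])
  then show ?thesis
    unfolding success_prob_def bind_return_pmf by (simp add: pmf_bind)
qed

lemma success_prob_return_pmf:
  assumes "finite (special_edges n i j)" and "special_edges n i j \<noteq> {}"
  shows "success_prob EH n i j adj (return_pmf r) step out q =
    ((\<Sum>es\<in>special_edges n i j.
        accept_prob (G0_adj EH n) adj (\<lambda>e. if e = es then 1 else 0) step out r q)
       / card (special_edges n i j)
     + (1 - accept_prob (G0_adj EH n) adj (\<lambda>_. 0) step out r q)) / 2"
proof -
  have trial: "pmf (map_pmf (\<lambda>tr. out r tr = b) (run (G0_adj EH n) adj col step r q)) True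
      = (if b then accept_prob (G0_adj EH n) adj col step out r q
         else 1 - accept_prob (G0_adj EH n) adj col step out r q)" for b col
    using measure_pmf.prob_compl[of "{tr. out r tr}" "run (G0_adj EH n) adj col step r q"]
    by (auto simp: pmf_map vimage_def accept_prob_def Compl_eq_Diff_UNIV[symmetric] Collect_neg_eq)
  show ?thesis
    unfolding success_prob_def bind_return_pmf
    by (simp add: pmf_bind integral_bernoulli_pmf colouring_dist_def bind_map_pmf bind_return_pmf
        trial integral_pmf_of_set[OF assms(2,1)])
qed

lemma success_prob_return_pmf_le:
  assumes "finite (special_edges n i j)" and "special_edges n i j \<noteq> {}"
  shows "success_prob EH n i j adj (return_pmf r) step out q
           \<le> 1/2 + real q / (2 * real (card (special_edges n i j)))"
proof -
  define S where "S = special_edges n i j"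
  define accept where "accept col = accept_prob (G0_adj EH n) adj col step out r q" for col
  define reveal where "reveal es = measure_pmf.prob (run (G0_adj EH n) adj (\<lambda>_. 0) step r q)
      {tr. es \<in> revealed_edges adj step r tr}" for es
  have card_S: "card S > 0"
    using assms by (simp add: S_def card_gt_0_iff)
  have "(\<Sum>es\<in>S. accept (\<lambda>e. if e = es then 1 else 0)) \<le> (\<Sum>es\<in>S. accept (\<lambda>_. 0) + reveal es)"
    unfolding accept_def reveal_def by (intro sum_mono accept_prob_le_add_prob_revealed) simp
  also have "\<dots> = card S * accept (\<lambda>_. 0) + (\<Sum>es\<in>S. reveal es)"
    by (simp add: sum.distrib)
  also have "(\<Sum>es\<in>S. reveal es) \<le> real q"
    unfolding reveal_def
  proof (rule sum_prob_mem_le)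
    show "finite S"
      using assms(1) by (simp add: S_def)
    show "card (S \<inter> revealed_edges adj step r tr) \<le> q"
      if "tr \<in> set_pmf (run (G0_adj EH n) adj (\<lambda>_. 0) step r q)" for tr
    proof -
      have "card (S \<inter> revealed_edges adj step r tr) \<le> card (revealed_edges adj step r tr)"
        by (rule card_mono[OF finite_revealed_edges]) blast
      also have "\<dots> \<le> q"
        using card_revealed_edges_le[of adj step r tr] length_run[OF that] by simp
      finally show ?thesis .
    qed
  qed
  finally have "(\<Sum>es\<in>S. accept (\<lambda>e. if e = es then 1 else 0)) / card S
      \<le> accept (\<lambda>_. 0) + q / card S"
    using card_S by (simp add: divide_simps mult.commute)
  then have "success_prob EH n i j adj (return_pmf r) step out q
      \<le> (accept (\<lambda>_. 0) + q / card S + (1 - accept (\<lambda>_. 0))) / 2"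
    unfolding success_prob_return_pmf[OF assms] S_def accept_def
    by (intro divide_right_mono add_right_mono) simp_all
  also have "\<dots> = 1/2 + real q / (2 * real (card S))"
    by (simp add: field_simps)
  finally show ?thesis
    by (simp add: S_def)
qed

lemma success_prob_le:
  assumes "finite (special_edges n i j)" and "special_edges n i j \<noteq> {}"
  shows "success_prob EH n i j adj R step out q
           \<le> 1/2 + real q / (2 * real (card (special_edges n i j)))"
proof (subst success_prob_mixture, rule measure_pmf.integral_le_const)
  show "integrable (measure_pmf R) (\<lambda>r. success_prob EH n i j adj (return_pmf r) step out q)"
    unfolding success_prob_def
    by (rule integrable_measure_pmf_bounded[where B = 1]) (simp add: pmf_le_1)
  show "AE r in measure_pmf R. success_prob EH n i j adj (return_pmf r) step out q
          \<le> 1/2 + real q / (2 * real (card (special_edges n i j)))"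
    by (rule AE_I2) (rule success_prob_return_pmf_le[OF assms])
qed

lemma card_part: "card (part n l) = n l"
proof -
  have "part n l = Pair l ` {..<n l}"
    unfolding part_def by auto
  then show ?thesis
    by (simp add: card_image inj_on_def)
qed

lemma card_special_edges:
  assumes "i \<noteq> j"
  shows "card (special_edges n i j) = n i * n j"
proof -
  have "inj_on (\<lambda>(u, v). {u, v}) (part n i \<times> part n j)"
    using assms by (auto simp: inj_on_def part_def doubleton_eq_iff)
  moreover have "special_edges n i j = (\<lambda>(u, v). {u, v}) ` (part n i \<times> part n j)"
    unfolding special_edges_def by auto
  ultimately show ?thesis
    by (simp add: card_image card_cartesian_product card_part)
qed

theorem lemma5p5:
  fixes k :: nat and EH :: "(nat \<times> nat) set" and y :: "nat \<Rightarrow> real" and i j :: nat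
  assumes "k \<ge> 2"
    and "EH \<subseteq> {..<k} \<times> {..<k}"
    and "sym EH"
    and "\<forall>a. (a, a) \<notin> EH"
    and "EH \<noteq> {}"
    and "lp_optimal k EH y"
    and "(i, j) \<in> EH"
    and "y i + y j = 1"
  shows "\<exists>c > (0::real). \<forall>(m::nat) (n::nat \<Rightarrow> nat) adj R step out (q::nat).
           m \<ge> 1 \<longrightarrow> (\<forall>l<k. real (n l) = real m powr y l) \<longrightarrow>
           valid_adj (G0_adj EH n) adj \<longrightarrow>
           success_prob EH n i j adj R step out q \<ge> 2/3 \<longrightarrow>
           real q \<ge> c * real m"
proof (intro exI[of _ "1/3"] conjI allI impI)
  (* Only y i + y j = 1 matters, as it makes |V_i| |V_j| = m. *)
  fix m n adj R step out q
  assume m: "1 \<le> m" and n: "\<forall>l<k. real (n l) = real m powr y l"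
    and success: "2/3 \<le> success_prob EH n i j adj R step out q"
  have "i \<noteq> j" "i < k" "j < k"
    using assms(2,4,7) by auto
  then have "real (card (special_edges n i j)) = real m powr y i * real m powr y j"
    using n by (simp add: card_special_edges)
  also have "\<dots> = real m"
    using m assms(8) by (simp flip: powr_add)
  finally have card_m: "card (special_edges n i j) = m"
    by simp
  then have "finite (special_edges n i j)" and "special_edges n i j \<noteq> {}"
    using m card_ge_0_finite by force+
  then have "2/3 \<le> 1/2 + real q / (2 * real m)"
    using success success_prob_le[of n i j EH adj R step out q] card_m by simp
  then show "1/3 * real m \<le> real q"
    using m by (simp add: field_simps)
qed simp

end
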